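(* Let $\mathbb{X},\mathbb{Y}$ be real normed linear spaces and let $F$ be a $k$-face of $B_{\mathbb{X}}$ for some $k\in\mathbb{N}$. If $T\in\mathbb{L}(\mathbb{X},\mathbb{Y})$ preserves TEA pairs contained in $F$ (i.e. for all $x,y\in F$, $(Tx,Ty)$ is a TEA pair in $\mathbb{Y}$), then either $T(F)=\{0\}$ or $\mathrm{Int}_r F\cap\ker T=\emptyset$.
   Context: A face of $B_{\mathbb{X}}$ is a nonempty convex subset $F\subset S_{\mathbb{X}}$ such that whenever $x_1,x_2\in S_{\mathbb{X}}$, $0<t<1$ and $(1-t)x_1+tx_2\in F$, then $x_1,x_2\in F$. $\mathrm{aff}(U)$ is the affine hull of $U$ and $\mathrm{Int}_r U=\{x\in U: \exists\varepsilon>0,\ \mathrm{aff}(U)\cap B(x,\varepsilon)\subset U\}$ is the relative interior. A $k$-face is a face whose affine hull has dimension $k$. $(x,y)$ is a TEA pair if $\|x+y\|=\|x\|+\|y\|$. *)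

theory Defs
  imports "HOL-Analysis.Analysis"
begin

definition face_of_ball :: "'a::real_normed_vector set \<Rightarrow> bool" where
  "face_of_ball F \<longleftrightarrow> F \<noteq> {} \<and> convex F \<and> F \<subseteq> sphere 0 1 \<and>
     (\<forall>x1\<in>sphere 0 1. \<forall>x2\<in>sphere 0 1. \<forall>t::real.
        0 < t \<and> t < 1 \<and> (1 - t) *\<^sub>R x1 + t *\<^sub>R x2 \<in> F \<longrightarrow> x1 \<in> F \<and> x2 \<in> F)"

text \<open>The affine hull of U has (finite) dimension k: for a point a of U, the linear space
  spanned by U - a (the direction space of aff U) has a basis with k elements.\<close>
definition aff_hull_dim :: "'a::real_vector set \<Rightarrow> nat \<Rightarrow> bool" where
  "aff_hull_dim U k \<longleftrightarrow> (\<exists>a\<in>U. \<exists>B. finite B \<and> independent B \<and> card B = k \<and>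
       span B = span ((\<lambda>x. x - a) ` U))"

definition k_face_of_ball :: "nat \<Rightarrow> 'a::real_normed_vector set \<Rightarrow> bool" where
  "k_face_of_ball k F \<longleftrightarrow> face_of_ball F \<and> aff_hull_dim F k"

definition rel_int :: "'a::real_normed_vector set \<Rightarrow> 'a set" where
  "rel_int U = {x \<in> U. \<exists>e>0. affine hull U \<inter> ball x e \<subseteq> U}"

definition TEA_pair :: "'a::real_normed_vector \<Rightarrow> 'a \<Rightarrow> bool" where
  "TEA_pair x y \<longleftrightarrow> norm (x + y) = norm x + norm y"

end

theory Submission
  imports Defs
begin

(* If z is a point of the relative interior of F with T z = 0 and y is any point of F, the
  segment from y through z can be prolonged slightly beyond z inside F, to w = z + d (z - y)
  with d > 0. Then T w = -d T y, and (T w, T y) is a TEA pair only if T y = 0. *)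

lemma rel_int_eq_rel_interior: "rel_int U = rel_interior U"
  unfolding rel_int_def rel_interior_ball by (auto simp: Int_commute)

lemma TEA_pair_scaleR_left_iff: "TEA_pair (a *\<^sub>R v) v \<longleftrightarrow> v = 0 \<or> a \<ge> 0"
proof -
  have "norm (a *\<^sub>R v + v) = \<bar>a + 1\<bar> * norm v"
    by (metis norm_scaleR scaleR_add_left scaleR_one)
  then have "TEA_pair (a *\<^sub>R v) v \<longleftrightarrow> \<bar>a + 1\<bar> * norm v = (\<bar>a\<bar> + 1) * norm v"
    by (simp add: TEA_pair_def algebra_simps)
  also have "\<dots> \<longleftrightarrow> v = 0 \<or> \<bar>a + 1\<bar> = \<bar>a\<bar> + 1"
    by auto
  also have "\<bar>a + 1\<bar> = \<bar>a\<bar> + 1 \<longleftrightarrow> a \<ge> 0"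
    by linarith
  finally show ?thesis .
qed

lemma rel_interior_prolong:
  fixes S :: "'a::real_normed_vector set"
  assumes "z \<in> rel_interior S" "y \<in> affine hull S"
  obtains d where "d > 0" "z + d *\<^sub>R (z - y) \<in> S"
proof -
  obtain e where "e > 0" and e: "ball z e \<inter> affine hull S \<subseteq> S"
    using assms(1) by (auto simp: mem_rel_interior_ball)
  have "norm (z - y) + 1 > 0"
    by (simp add: add_nonneg_pos)
  define d where "d = e / (norm (z - y) + 1)"
  have "d > 0"
    using \<open>e > 0\<close> \<open>norm (z - y) + 1 > 0\<close> by (simp add: d_def)
  have "d * norm (z - y) < e"
  proof -
    have "d * norm (z - y) < d * (norm (z - y) + 1)"
      using \<open>d > 0\<close> by simp
    also have "\<dots> = e"
      using \<open>norm (z - y) + 1 > 0\<close> by (simp add: d_def)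
    finally show ?thesis .
  qed
  then have "z + d *\<^sub>R (z - y) \<in> ball z e"
    using \<open>d > 0\<close> by (simp add: dist_norm)
  moreover have "z + d *\<^sub>R (z - y) \<in> affine hull S"
  proof -
    have "z \<in> affine hull S"
      by (rule hull_inc) (use assms(1) rel_interior_subset in blast)
    then have "(1 + d) *\<^sub>R z + (- d) *\<^sub>R y \<in> affine hull S"
      using assms(2) by (intro mem_affine affine_affine_hull) auto
    then show ?thesis
      by (simp add: algebra_simps)
  qed
  ultimately show thesis
    using that[of d] \<open>d > 0\<close> e by blast
qed

lemma TEA_preserving_vanishes_if_kernel_meets_rel_interior:
  fixes T :: "'a::real_normed_vector \<Rightarrow> 'b::real_normed_vector"
  assumes "linear T"
    and TEA: "\<forall>x\<in>U. \<forall>y\<in>U. TEA_pair (T x) (T y)"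
    and "z \<in> rel_interior U" "T z = 0" "y \<in> U"
  shows "T y = 0"
proof -
  obtain d where "d > 0" and w: "z + d *\<^sub>R (z - y) \<in> U"
    using rel_interior_prolong[OF \<open>z \<in> rel_interior U\<close>] \<open>y \<in> U\<close> hull_inc by metis
  have "T (z + d *\<^sub>R (z - y)) = (- d) *\<^sub>R T y"
    using \<open>T z = 0\<close> by (simp add: linear_add[OF \<open>linear T\<close>] linear_cmul[OF \<open>linear T\<close>]
        linear_diff[OF \<open>linear T\<close>])
  with TEA w \<open>y \<in> U\<close> have "TEA_pair ((- d) *\<^sub>R T y) (T y)"
    by metis
  with \<open>d > 0\<close> show ?thesis
    using TEA_pair_scaleR_left_iff[of "- d" "T y"] by simp
qed

theorem mainTheorem10:
  fixes T :: "'a::real_normed_vector \<Rightarrow> 'b::real_normed_vector"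
    and F :: "'a set" and k :: nat
  assumes "k_face_of_ball k F"
    and "bounded_linear T"
    and "\<forall>x\<in>F. \<forall>y\<in>F. TEA_pair (T x) (T y)"
  shows "T ` F = {0} \<or> rel_int F \<inter> {x. T x = 0} = {}"
proof (rule disjCI)
  assume "rel_int F \<inter> {x. T x = 0} \<noteq> {}"
  then obtain z where "z \<in> rel_interior F" "T z = 0"
    by (auto simp: rel_int_eq_rel_interior)
  then have "\<forall>y\<in>F. T y = 0"
    using TEA_preserving_vanishes_if_kernel_meets_rel_interior
      bounded_linear.linear[OF assms(2)] assms(3) by blast
  moreover have "F \<noteq> {}"
    using assms(1) by (simp add: k_face_of_ball_def face_of_ball_def)
  ultimately show "T ` F = {0}"
    by auto
qed

end
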